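(* Let $F:\mathcal{P}(V,A)\to S_2(A)$ be a consular election rule satisfying SPP and SPO. Then $F$ is reducible if and only if its range graph $\mathcal{G}(F)$ is bipartite.
   Context: $V$ is a finite nonempty set of voters, $A$ a finite set of alternatives; a profile $P$ assigns to each voter $i$ a linear order $P_i$ on $A$; $P_i'P_{-i}$ replaces voter $i$'s order by $P_i'$; $P|_B$ is the profile of restrictions to $B\subseteq A$. $S_2(A)$ is the set of 2-element subsets of $A$; a consular election rule is a map $F:\mathcal{P}(V,A)\to S_2(A)$. SPO: for all $P$, $i$, $P_i'$, $\mathrm{best}(P_i,F(P))\succeq_i\mathrm{best}(P_i,F(P_i'P_{-i}))$; SPP: same with $\mathrm{worst}$, where $\mathrm{best}(P_i,W)$, $\mathrm{worst}(P_i,W)$ are the $P_i$-best and $P_i$-worst elements of $W$. $F$ is reducible if there is a partition $A=B\uplus C$ and social choice functions $G:\mathcal{P}(V,B)\to B$, $H:\mathcal{P}(V,C)\to C$ with $F(P)=\{G(P|_B),H(P|_C)\}$ for all $P$. The range graph $\mathcal{G}(F)$ has vertex set $A$ and edge set equal to the range of $F$. *)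

theory Defs
  imports Main
begin

text \<open>Preferences: a linear order on a set A is a relation R with
  linear_order_on A R (reflexive, antisymmetric, transitive, total on A);
  the pair (x,y) in R means x is weakly preferred to y (x is ranked at least as high as y).\<close>

definition profiles :: "'v set \<Rightarrow> 'a set \<Rightarrow> ('v \<Rightarrow> 'a rel) set" where
  "profiles V A = {P. (\<forall>i\<in>V. linear_order_on A (P i)) \<and> (\<forall>i. i \<notin> V \<longrightarrow> P i = {})}"

definition restrict_profile :: "('v \<Rightarrow> 'a rel) \<Rightarrow> 'a set \<Rightarrow> ('v \<Rightarrow> 'a rel)" where
  "restrict_profile P B = (\<lambda>i. P i \<inter> (B \<times> B))"

definition S2 :: "'a set \<Rightarrow> 'a set set" where
  "S2 A = {W. W \<subseteq> A \<and> card W = 2}"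

definition consular_rule :: "'v set \<Rightarrow> 'a set \<Rightarrow> (('v \<Rightarrow> 'a rel) \<Rightarrow> 'a set) \<Rightarrow> bool" where
  "consular_rule V A F = (\<forall>P\<in>profiles V A. F P \<in> S2 A)"

definition best :: "'a rel \<Rightarrow> 'a set \<Rightarrow> 'a" where
  "best R W = (THE x. x \<in> W \<and> (\<forall>y\<in>W. (x, y) \<in> R))"

definition worst :: "'a rel \<Rightarrow> 'a set \<Rightarrow> 'a" where
  "worst R W = (THE x. x \<in> W \<and> (\<forall>y\<in>W. (y, x) \<in> R))"

definition SPO :: "'v set \<Rightarrow> 'a set \<Rightarrow> (('v \<Rightarrow> 'a rel) \<Rightarrow> 'a set) \<Rightarrow> bool" where
  "SPO V A F = (\<forall>P\<in>profiles V A. \<forall>i\<in>V. \<forall>Pi'. linear_order_on A Pi' \<longrightarrow>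
      (best (P i) (F P), best (P i) (F (P(i := Pi')))) \<in> P i)"

definition SPP :: "'v set \<Rightarrow> 'a set \<Rightarrow> (('v \<Rightarrow> 'a rel) \<Rightarrow> 'a set) \<Rightarrow> bool" where
  "SPP V A F = (\<forall>P\<in>profiles V A. \<forall>i\<in>V. \<forall>Pi'. linear_order_on A Pi' \<longrightarrow>
      (worst (P i) (F P), worst (P i) (F (P(i := Pi')))) \<in> P i)"

definition reducible :: "'v set \<Rightarrow> 'a set \<Rightarrow> (('v \<Rightarrow> 'a rel) \<Rightarrow> 'a set) \<Rightarrow> bool" where
  "reducible V A F = (\<exists>B C G H. B \<inter> C = {} \<and> B \<union> C = A \<and>
      (\<forall>P\<in>profiles V B. G P \<in> B) \<and> (\<forall>P\<in>profiles V C. H P \<in> C) \<and>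
      (\<forall>P\<in>profiles V A. F P = {G (restrict_profile P B), H (restrict_profile P C)}))"

definition range_edges :: "'v set \<Rightarrow> 'a set \<Rightarrow> (('v \<Rightarrow> 'a rel) \<Rightarrow> 'a set) \<Rightarrow> 'a set set" where
  "range_edges V A F = F ` profiles V A"

definition bipartite :: "'a set \<Rightarrow> 'a set set \<Rightarrow> bool" where
  "bipartite Vs E = (\<exists>X Y. X \<inter> Y = {} \<and> X \<union> Y = Vs \<and>
      (\<forall>e\<in>E. \<exists>x\<in>X. \<exists>y\<in>Y. e = {x, y}))"

end

theory Submission
  imports Defs
begin

text \<open>
  Reducibility always splits every outcome across the two parts, so only the converse needs
  an argument. Let the range graph be bipartite with sides \<open>X\<close> and \<open>A - X\<close>; then each
  outcome \<open>F P\<close> consists of one alternative of either side, and it suffices to show that the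
  alternative on the side \<open>X\<close> depends only on the restriction of \<open>P\<close> to \<open>X\<close>. Changing one
  voter at a time, consider a voter whose new order agrees with the old one on \<open>X\<close>. Raising
  \<open>X\<close> above \<open>A - X\<close> in her order (keeping the order within each side) does not move the winner
  on \<open>X\<close>: deviating back and forth, SPO and SPP force the new outcome to be weakly better on
  both sides, and SPO and SPP in the forward direction then pin the winner on \<open>X\<close>. Between two
  orders with \<open>X\<close> on top that agree on \<open>X\<close>, SPO in both directions suffices.
\<close>

lemma linear_order_onD:
  assumes "linear_order_on A R"
  shows "R \<subseteq> A \<times> A" and "a \<in> A \<Longrightarrow> (a, a) \<in> R"
    and "(a, b) \<in> R \<Longrightarrow> (b, c) \<in> R \<Longrightarrow> (a, c) \<in> R"
    and "(a, b) \<in> R \<Longrightarrow> (b, a) \<in> R \<Longrightarrow> a = b"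
    and "a \<in> A \<Longrightarrow> b \<in> A \<Longrightarrow> (a, b) \<in> R \<or> (b, a) \<in> R"
proof -
  have po: "partial_order_on A R" and total: "total_on A R"
    using assms unfolding linear_order_on_def by auto
  show "R \<subseteq> A \<times> A"
    using partial_order_onD(4)[OF po] .
  show "a \<in> A \<Longrightarrow> (a, a) \<in> R"
    using refl_onD[OF partial_order_onD(1)[OF po]] .
  show "(a, b) \<in> R \<Longrightarrow> (b, c) \<in> R \<Longrightarrow> (a, c) \<in> R"
    using transD[OF partial_order_onD(2)[OF po]] .
  show "(a, b) \<in> R \<Longrightarrow> (b, a) \<in> R \<Longrightarrow> a = b"
    using antisymD[OF partial_order_onD(3)[OF po]] .
  show "a \<in> A \<Longrightarrow> b \<in> A \<Longrightarrow> (a, b) \<in> R \<or> (b, a) \<in> R"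
    using total refl_onD[OF partial_order_onD(1)[OF po]] unfolding total_on_def by metis
qed

lemma linear_order_onI:
  assumes "R \<subseteq> A \<times> A" and "\<And>a. a \<in> A \<Longrightarrow> (a, a) \<in> R"
    and "\<And>a b c. (a, b) \<in> R \<Longrightarrow> (b, c) \<in> R \<Longrightarrow> (a, c) \<in> R"
    and "\<And>a b. (a, b) \<in> R \<Longrightarrow> (b, a) \<in> R \<Longrightarrow> a = b"
    and "\<And>a b. a \<in> A \<Longrightarrow> b \<in> A \<Longrightarrow> (a, b) \<in> R \<or> (b, a) \<in> R"
  shows "linear_order_on A R"
  unfolding order_on_defs total_on_def
  using assms by (auto intro: refl_onI transI antisymI)

lemma linear_order_on_restrict:
  assumes R: "linear_order_on A R" and "B \<subseteq> A"
  shows "linear_order_on B (R \<inter> B \<times> B)"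
proof (rule linear_order_onI)
  note R_facts = linear_order_onD[OF R]
  show "R \<inter> B \<times> B \<subseteq> B \<times> B"
    by blast
  show "(a, a) \<in> R \<inter> B \<times> B" if "a \<in> B" for a
    using R_facts(2) assms(2) that by blast
  show "(a, c) \<in> R \<inter> B \<times> B" if "(a, b) \<in> R \<inter> B \<times> B" and "(b, c) \<in> R \<inter> B \<times> B" for a b c
    using R_facts(3) that by blast
  show "a = b" if "(a, b) \<in> R \<inter> B \<times> B" and "(b, a) \<in> R \<inter> B \<times> B" for a b
    using R_facts(4) that by blast
  show "(a, b) \<in> R \<inter> B \<times> B \<or> (b, a) \<in> R \<inter> B \<times> B" if "a \<in> B" and "b \<in> B" for a b
    using R_facts(5) assms(2) that by blast
qed

definition raise_to_top :: "'a set \<Rightarrow> 'a set \<Rightarrow> 'a rel \<Rightarrow> 'a rel" where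
  "raise_to_top X A R = {(a, b) \<in> R. a \<in> X \<longleftrightarrow> b \<in> X} \<union> X \<times> (A - X)"

lemma linear_order_on_raise_to_top:
  assumes R: "linear_order_on A R" and "X \<subseteq> A"
  shows "linear_order_on A (raise_to_top X A R)"
proof (rule linear_order_onI)
  note R_facts = linear_order_onD[OF R]
  show "raise_to_top X A R \<subseteq> A \<times> A"
    using R_facts(1) assms(2) unfolding raise_to_top_def by blast
  show "(a, a) \<in> raise_to_top X A R" if "a \<in> A" for a
    using R_facts(2)[OF that] unfolding raise_to_top_def by blast
  show "(a, c) \<in> raise_to_top X A R"
    if "(a, b) \<in> raise_to_top X A R" and "(b, c) \<in> raise_to_top X A R" for a b c
    using that R_facts(1,3) unfolding raise_to_top_def by blast
  show "a = b" if "(a, b) \<in> raise_to_top X A R" and "(b, a) \<in> raise_to_top X A R" for a b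
    using that R_facts(4) unfolding raise_to_top_def by blast
  show "(a, b) \<in> raise_to_top X A R \<or> (b, a) \<in> raise_to_top X A R"
    if "a \<in> A" and "b \<in> A" for a b
    using R_facts(5)[OF that] that unfolding raise_to_top_def by blast
qed

lemma ex_linear_order_on: "\<exists>R. linear_order_on A R"
  using well_order_on[of A] unfolding well_order_on_def by blast

lemma best_doubleton:
  assumes R: "linear_order_on A R" and "a \<in> A" and "b \<in> A"
  shows "best R {a, b} = (if (a, b) \<in> R then a else b)"
proof -
  note R_facts = linear_order_onD[OF R]
  have "(b, a) \<in> R" if "(a, b) \<notin> R"
    using R_facts(5) assms(2,3) that by blast
  then show ?thesis
    unfolding best_def using R_facts(2,4) assms(2,3) by (intro the_equality) auto
qed

lemma worst_doubleton:
  assumes R: "linear_order_on A R" and "a \<in> A" and "b \<in> A"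
  shows "worst R {a, b} = (if (a, b) \<in> R then b else a)"
proof -
  note R_facts = linear_order_onD[OF R]
  have "(b, a) \<in> R" if "(a, b) \<notin> R"
    using R_facts(5) assms(2,3) that by blast
  then show ?thesis
    unfolding worst_def using R_facts(2,4) assms(2,3) by (intro the_equality) auto
qed

lemma best_doubleton_top:
  assumes "linear_order_on A R" and "X \<times> (A - X) \<subseteq> R" and "x \<in> X" and "y \<in> A - X"
  shows "best R {x, y} = x"
proof -
  have "(x, y) \<in> R"
    using assms(2-4) by blast
  moreover from this have "x \<in> A" and "y \<in> A"
    using linear_order_onD(1)[OF assms(1)] by blast+
  ultimately show ?thesis
    using best_doubleton[OF assms(1)] by simp
qed

lemma worst_doubleton_top:
  assumes "linear_order_on A R" and "X \<times> (A - X) \<subseteq> R" and "x \<in> X" and "y \<in> A - X"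
  shows "worst R {x, y} = y"
proof -
  have "(x, y) \<in> R"
    using assms(2-4) by blast
  moreover from this have "x \<in> A" and "y \<in> A"
    using linear_order_onD(1)[OF assms(1)] by blast+
  ultimately show ?thesis
    using worst_doubleton[OF assms(1)] by simp
qed

lemma dominated_pair_first_eq:
  assumes R: "linear_order_on A R" and in_A: "x \<in> A" "x' \<in> A" "y \<in> A" "y' \<in> A"
    and x'x: "(x', x) \<in> R" and y'y: "(y', y) \<in> R"
    and best: "(best R {x, y}, best R {x', y'}) \<in> R"
    and worst: "(worst R {x, y}, worst R {x', y'}) \<in> R"
  shows "x = x'"
proof (rule ccontr)
  note R_facts = linear_order_onD[OF R]
  assume "x \<noteq> x'"
  with x'x have strict: "(x, x') \<notin> R"
    using R_facts(4) by blast
  show False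
  proof (cases "(x, y) \<in> R")
    case True
    then have "(x, best R {x', y'}) \<in> R"
      using best best_doubleton[OF R in_A(1,3)] by simp
    moreover have "(best R {x', y'}, x') \<in> R"
      using best_doubleton[OF R in_A(2,4)] R_facts(2,5) in_A(2,4) by auto
    ultimately show False
      using strict R_facts(3) by blast
  next
    case False
    then have "(x, worst R {x', y'}) \<in> R"
      using worst worst_doubleton[OF R in_A(1,3)] by simp
    then have "(x, x') \<in> R \<or> (x, y') \<in> R"
      using worst_doubleton[OF R in_A(2,4)] by (simp split: if_splits)
    then show False
      using strict False y'y R_facts(3) by blast
  qed
qed

lemma profiles_linear_order: "P \<in> profiles V A \<Longrightarrow> i \<in> V \<Longrightarrow> linear_order_on A (P i)"
  unfolding profiles_def by blast

lemma profiles_update: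
  "P \<in> profiles V A \<Longrightarrow> i \<in> V \<Longrightarrow> linear_order_on A R \<Longrightarrow> P(i := R) \<in> profiles V A"
  unfolding profiles_def by auto

lemma restrict_profile_in_profiles:
  assumes "P \<in> profiles V A" and "B \<subseteq> A"
  shows "restrict_profile P B \<in> profiles V B"
  using assms linear_order_on_restrict[OF profiles_linear_order[OF assms(1)] assms(2)]
  unfolding profiles_def restrict_profile_def by auto

lemma ex_profile: "\<exists>P. P \<in> profiles V A"
proof -
  obtain R where "linear_order_on A R"
    using ex_linear_order_on by blast
  then have "(\<lambda>i. if i \<in> V then R else {}) \<in> profiles V A"
    unfolding profiles_def by simp
  then show ?thesis
    by blast
qed

lemma SPOD:
  "SPO V A F \<Longrightarrow> P \<in> profiles V A \<Longrightarrow> i \<in> V \<Longrightarrow> linear_order_on A R \<Longrightarrow>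
    (best (P i) (F P), best (P i) (F (P(i := R)))) \<in> P i"
  unfolding SPO_def by blast

lemma SPPD:
  "SPP V A F \<Longrightarrow> P \<in> profiles V A \<Longrightarrow> i \<in> V \<Longrightarrow> linear_order_on A R \<Longrightarrow>
    (worst (P i) (F P), worst (P i) (F (P(i := R)))) \<in> P i"
  unfolding SPP_def by blast

lemma ex_factor_through:
  assumes "s\<^sub>0 \<in> S" and "\<And>s. s \<in> S \<Longrightarrow> f s \<in> B"
    and "\<And>s t. s \<in> S \<Longrightarrow> t \<in> S \<Longrightarrow> r s = r t \<Longrightarrow> f s = f t"
  shows "\<exists>g. (\<forall>q. g q \<in> B) \<and> (\<forall>s\<in>S. f s = g (r s))"
proof -
  define g where "g q = f (if q \<in> r ` S then inv_into S r q else s\<^sub>0)" for q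
  have "g q \<in> B" for q
    unfolding g_def by (rule assms(2)) (simp add: assms(1) inv_into_into)
  moreover have "f s = g (r s)" if s: "s \<in> S" for s
  proof -
    have rs: "r s \<in> r ` S"
      using s by (rule imageI)
    then have "g (r s) = f (inv_into S r (r s))"
      unfolding g_def by simp
    also have "\<dots> = f s"
      using assms(3)[OF inv_into_into[OF rs] s f_inv_into_f[OF rs]] .
    finally show ?thesis
      by simp
  qed
  ultimately show ?thesis
    by blast
qed

definition side_winner :: "'a set \<Rightarrow> ('p \<Rightarrow> 'a set) \<Rightarrow> 'p \<Rightarrow> 'a" where
  "side_winner X F P = the_elem (F P \<inter> X)"

lemma side_winner_eq:
  assumes "F P = {x, y}" and "x \<in> X" and "y \<notin> X"
  shows "side_winner X F P = x"
proof -
  have "F P \<inter> X = {x}"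
    using assms by auto
  then show ?thesis
    unfolding side_winner_def by simp
qed

locale split_rule =
  fixes V :: "'v set" and A :: "'a set" and F :: "('v \<Rightarrow> 'a rel) \<Rightarrow> 'a set" and X :: "'a set"
  assumes finite_voters: "finite V"
    and SPO: "SPO V A F" and SPP: "SPP V A F"
    and subset: "X \<subseteq> A"
    and outcome_split: "P \<in> profiles V A \<Longrightarrow> \<exists>x\<in>X. \<exists>y\<in>A - X. F P = {x, y}"
begin

abbreviation winner :: "('v \<Rightarrow> 'a rel) \<Rightarrow> 'a" where
  "winner \<equiv> side_winner X F"

lemma outcomeE:
  assumes "P \<in> profiles V A"
  obtains x y where "F P = {x, y}" "x \<in> X" "y \<in> A - X" "winner P = x"
proof -
  obtain x y where "x \<in> X" "y \<in> A - X" "F P = {x, y}"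
    using outcome_split[OF assms] by blast
  with side_winner_eq[of F P x y X] that show thesis
    by simp
qed

lemma winner_update_top:
  assumes P: "P \<in> profiles V A" and i: "i \<in> V" and Q: "linear_order_on A Q"
    and top_P: "X \<times> (A - X) \<subseteq> P i" and top_Q: "X \<times> (A - X) \<subseteq> Q"
    and agree: "Q \<inter> X \<times> X = P i \<inter> X \<times> X"
  shows "winner (P(i := Q)) = winner P"
proof -
  have P': "P(i := Q) \<in> profiles V A"
    using profiles_update[OF P i Q] .
  have R: "linear_order_on A (P i)"
    using profiles_linear_order[OF P i] .
  obtain x y where xy: "F P = {x, y}" "x \<in> X" "y \<in> A - X" "winner P = x"
    using outcomeE[OF P] .
  obtain x' y' where x'y': "F (P(i := Q)) = {x', y'}" "x' \<in> X" "y' \<in> A - X"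
    "winner (P(i := Q)) = x'"
    using outcomeE[OF P'] .
  have "(best (P i) {x, y}, best (P i) {x', y'}) \<in> P i"
    using SPOD[OF SPO P i Q] xy(1) x'y'(1) by simp
  then have "(x, x') \<in> P i"
    using best_doubleton_top[OF R top_P] xy(2,3) x'y'(2,3) by simp
  moreover have "(best Q {x', y'}, best Q {x, y}) \<in> Q"
    using SPOD[OF SPO P' i R] xy(1) x'y'(1) by simp
  then have "(x', x) \<in> Q"
    using best_doubleton_top[OF Q top_Q] xy(2,3) x'y'(2,3) by simp
  then have "(x', x) \<in> P i"
    using agree xy(2) x'y'(2) by blast
  ultimately show ?thesis
    using linear_order_onD(4)[OF R] xy(4) x'y'(4) by simp
qed

lemma winner_raise_to_top:
  assumes P: "P \<in> profiles V A" and i: "i \<in> V"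
  shows "winner (P(i := raise_to_top X A (P i))) = winner P"
proof -
  define Q where "Q = raise_to_top X A (P i)"
  have R: "linear_order_on A (P i)"
    using profiles_linear_order[OF P i] .
  have Q: "linear_order_on A Q"
    unfolding Q_def using linear_order_on_raise_to_top[OF R subset] .
  have top_Q: "X \<times> (A - X) \<subseteq> Q"
    unfolding Q_def raise_to_top_def by blast
  have P': "P(i := Q) \<in> profiles V A" and restore: "(P(i := Q))(i := P i) = P"
    using profiles_update[OF P i Q] by simp_all
  obtain x y where xy: "F P = {x, y}" "x \<in> X" "y \<in> A - X" "winner P = x"
    using outcomeE[OF P] .
  obtain x' y' where x'y': "F (P(i := Q)) = {x', y'}" "x' \<in> X" "y' \<in> A - X"
    "winner (P(i := Q)) = x'"
    using outcomeE[OF P'] .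
  have "(best Q {x', y'}, best Q {x, y}) \<in> Q"
    using SPOD[OF SPO P' i R] xy(1) x'y'(1) restore by simp
  then have "(x', x) \<in> Q"
    using best_doubleton_top[OF Q top_Q] xy(2,3) x'y'(2,3) by simp
  then have "(x', x) \<in> P i"
    using xy(2) x'y'(2) unfolding Q_def raise_to_top_def by blast
  moreover have "(worst Q {x', y'}, worst Q {x, y}) \<in> Q"
    using SPPD[OF SPP P' i R] xy(1) x'y'(1) restore by simp
  then have "(y', y) \<in> Q"
    using worst_doubleton_top[OF Q top_Q] xy(2,3) x'y'(2,3) by simp
  then have "(y', y) \<in> P i"
    using xy(3) x'y'(3) unfolding Q_def raise_to_top_def by blast
  moreover have "(best (P i) {x, y}, best (P i) {x', y'}) \<in> P i"
    and "(worst (P i) {x, y}, worst (P i) {x', y'}) \<in> P i"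
    using SPOD[OF SPO P i Q] SPPD[OF SPP P i Q] xy(1) x'y'(1) by simp_all
  ultimately have "x = x'"
    using dominated_pair_first_eq[OF R] xy(2,3) x'y'(2,3) subset by blast
  then show ?thesis
    using xy(4) x'y'(4) unfolding Q_def by simp
qed

lemma winner_update_agree:
  assumes P: "P \<in> profiles V A" and i: "i \<in> V" and Q: "linear_order_on A Q"
    and agree: "Q \<inter> X \<times> X = P i \<inter> X \<times> X"
  shows "winner (P(i := Q)) = winner P"
proof -
  have R: "linear_order_on A (P i)"
    using profiles_linear_order[OF P i] .
  define P\<^sub>1 where "P\<^sub>1 = P(i := raise_to_top X A (P i))"
  have P\<^sub>1: "P\<^sub>1 \<in> profiles V A"
    unfolding P\<^sub>1_def using profiles_update[OF P i linear_order_on_raise_to_top[OF R subset]] .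
  have "winner (P\<^sub>1(i := raise_to_top X A Q)) = winner P\<^sub>1"
  proof (rule winner_update_top[OF P\<^sub>1 i linear_order_on_raise_to_top[OF Q subset]])
    show "X \<times> (A - X) \<subseteq> P\<^sub>1 i" and "X \<times> (A - X) \<subseteq> raise_to_top X A Q"
      unfolding P\<^sub>1_def raise_to_top_def by auto
    show "raise_to_top X A Q \<inter> X \<times> X = P\<^sub>1 i \<inter> X \<times> X"
      using agree unfolding P\<^sub>1_def raise_to_top_def by auto
  qed
  also have "winner P\<^sub>1 = winner P"
    unfolding P\<^sub>1_def using winner_raise_to_top[OF P i] .
  finally have "winner (P(i := raise_to_top X A Q)) = winner P"
    unfolding P\<^sub>1_def by simp
  moreover have "winner (P(i := raise_to_top X A Q)) = winner (P(i := Q))"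
    using winner_raise_to_top[OF profiles_update[OF P i Q] i] by simp
  ultimately show ?thesis
    by simp
qed

lemma winner_restrict_eq:
  assumes P: "P \<in> profiles V A" and P': "P' \<in> profiles V A"
    and eq: "restrict_profile P X = restrict_profile P' X"
  shows "winner P' = winner P"
proof -
  define mix where "mix S = (\<lambda>i. if i \<in> S then P' i else P i)" for S
  have "mix S \<in> profiles V A \<and> winner (mix S) = winner P" if "finite S" and "S \<subseteq> V" for S
    using that
  proof (induction S rule: finite_induct)
    case empty
    then show ?case
      using P by (simp add: mix_def)
  next
    case (insert j S)
    then have j: "j \<in> V" and IH: "mix S \<in> profiles V A" "winner (mix S) = winner P"
      by auto
    have Q: "linear_order_on A (P' j)"
      using profiles_linear_order[OF P' j] .
    have "P' j \<inter> X \<times> X = mix S j \<inter> X \<times> X"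
      using fun_cong[OF eq, of j] insert(2) unfolding mix_def restrict_profile_def by simp
    then have "winner ((mix S)(j := P' j)) = winner P"
      using winner_update_agree[OF IH(1) j Q] IH(2) by simp
    moreover have "mix (insert j S) = (mix S)(j := P' j)"
      unfolding mix_def by (simp add: fun_eq_iff)
    ultimately show ?case
      using profiles_update[OF IH(1) j Q] by argo
  qed
  moreover have "mix V = P'"
    using P P' unfolding mix_def profiles_def by (auto simp: fun_eq_iff)
  ultimately show ?thesis
    using finite_voters by blast
qed

lemma winner_mem: "P \<in> profiles V A \<Longrightarrow> winner P \<in> X"
  by (elim outcomeE) simp

lemma outcome_eq_winners:
  assumes "P \<in> profiles V A"
  shows "F P = {winner P, side_winner (A - X) F P}"
proof -
  obtain x y where xy: "F P = {x, y}" "x \<in> X" "y \<in> A - X" "winner P = x"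
    using outcomeE[OF assms] .
  then have "side_winner (A - X) F P = y"
    using side_winner_eq[of F P y x "A - X"] by auto
  with xy show ?thesis
    by simp
qed

lemma winner_factors_through_restriction:
  "\<exists>G. (\<forall>Q. G Q \<in> X) \<and> (\<forall>P\<in>profiles V A. winner P = G (restrict_profile P X))"
proof -
  obtain P\<^sub>0 where "P\<^sub>0 \<in> profiles V A"
    using ex_profile by blast
  then show ?thesis
  proof (rule ex_factor_through)
    show "winner P \<in> X" if "P \<in> profiles V A" for P
      using winner_mem[OF that] .
    show "winner P = winner P'"
      if "P \<in> profiles V A" and "P' \<in> profiles V A"
        and "restrict_profile P X = restrict_profile P' X" for P P'
      using winner_restrict_eq[OF that(2,1) that(3)[symmetric]] .
  qed
qed

end

lemma split_rule_complement:
  assumes "split_rule V A F X"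
  shows "split_rule V A F (A - X)"
proof -
  interpret split_rule V A F X
    by fact
  show ?thesis
  proof
    fix P
    assume "P \<in> profiles V A"
    then obtain x y where "F P = {x, y}" "x \<in> X" "y \<in> A - X"
      by (rule outcomeE)
    then show "\<exists>x\<in>A - X. \<exists>y\<in>A - (A - X). F P = {x, y}"
      using subset by blast
  qed (use finite_voters SPO SPP in auto)
qed

lemma (in split_rule) reducible: "reducible V A F"
proof -
  interpret co: split_rule V A F "A - X"
    using split_rule_complement split_rule_axioms by blast
  obtain G where G: "\<forall>Q. G Q \<in> X" "\<forall>P\<in>profiles V A. winner P = G (restrict_profile P X)"
    using winner_factors_through_restriction by blast
  obtain H where H: "\<forall>Q. H Q \<in> A - X"
    "\<forall>P\<in>profiles V A. co.winner P = H (restrict_profile P (A - X))"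
    using co.winner_factors_through_restriction by blast
  show ?thesis
    unfolding reducible_def
  proof (intro exI conjI ballI)
    show "X \<inter> (A - X) = {}" and "X \<union> (A - X) = A"
      using subset by blast+
    show "G Q \<in> X" and "H Q \<in> A - X" for Q
      using G(1) H(1) by blast+
    show "F P = {G (restrict_profile P X), H (restrict_profile P (A - X))}"
      if "P \<in> profiles V A" for P
      using outcome_eq_winners[OF that] G(2) H(2) that by simp
  qed
qed

lemma bipartite_range_if_reducible:
  assumes "reducible V A F"
  shows "bipartite A (range_edges V A F)"
proof -
  obtain B C G H where BC: "B \<inter> C = {}" "B \<union> C = A"
    and G: "\<forall>P\<in>profiles V B. G P \<in> B" and H: "\<forall>P\<in>profiles V C. H P \<in> C"
    and F: "\<forall>P\<in>profiles V A. F P = {G (restrict_profile P B), H (restrict_profile P C)}"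
    using assms unfolding reducible_def by blast
  have "\<exists>x\<in>B. \<exists>y\<in>C. F P = {x, y}" if P: "P \<in> profiles V A" for P
  proof (intro bexI)
    show "G (restrict_profile P B) \<in> B"
      using G restrict_profile_in_profiles[OF P] BC(2) by blast
    show "H (restrict_profile P C) \<in> C"
      using H restrict_profile_in_profiles[OF P] BC(2) by blast
    show "F P = {G (restrict_profile P B), H (restrict_profile P C)}"
      using F P by blast
  qed
  then show ?thesis
    unfolding bipartite_def range_edges_def using BC by (intro exI[of _ B] exI[of _ C]) auto
qed

theorem corollary27:
  fixes V :: "'v set" and A :: "'a set" and F :: "('v \<Rightarrow> 'a rel) \<Rightarrow> 'a set"
  assumes "finite V" and "V \<noteq> {}" and "finite A"
    and "consular_rule V A F"
    and "SPP V A F" and "SPO V A F"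
  shows "reducible V A F \<longleftrightarrow> bipartite A (range_edges V A F)"
proof
  assume "reducible V A F"
  then show "bipartite A (range_edges V A F)"
    by (rule bipartite_range_if_reducible)
next
  assume "bipartite A (range_edges V A F)"
  then obtain X Y where XY: "X \<inter> Y = {}" "X \<union> Y = A"
    and edges: "\<forall>e\<in>range_edges V A F. \<exists>x\<in>X. \<exists>y\<in>Y. e = {x, y}"
    unfolding bipartite_def by blast
  have "split_rule V A F X"
  proof
    show "X \<subseteq> A"
      using XY(2) by blast
    have "Y = A - X"
      using XY by blast
    then show "\<exists>x\<in>X. \<exists>y\<in>A - X. F P = {x, y}" if "P \<in> profiles V A" for P
      using edges that unfolding range_edges_def by simp
  qed (use assms in simp_all)
  then show "reducible V A F"
    by (rule split_rule.reducible)
qed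

end
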